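(* Let $F$ be a distribution function on $[0,1]$ with a positive, non-increasing, differentiable density $g$ and non-decreasing hazard ratio $g(x)/(1-F(x))$. Let $\{f_{i,j}\}$, $f_{i,j}=f_{j,i}$, be independent with distribution $F$, let $I\subseteq[n]$, $|I|=r$, and let $D_I$ be the event that $f_{i,j}\ge (f_{i,i}+f_{j,j})/2$ for all distinct $i,j\in I$. For $C\subseteq[0,1]^r$ set $\mathrm{P}_C(D_I)=\mathrm{P}\bigl(D_I\cap\{(f_{i,i})_{i\in I}\in C\}\bigr)$. Let \[ C_1=\Bigl\{\mathbf x\in[0,1]^r:\ \Bigl|\sum_{i=1}^r F(x_i)-2\Bigr|\le r^{-1/3}\Bigr\}. \] Then, for all sufficiently large $r$, \[ \mathrm{P}(D_I)-\mathrm{P}_{C_1}(D_I)\le\left(\frac{2}{r}\right)^r\exp\Bigl(-\frac{r^{1/3}}{10}\Bigr). \]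
   Context: $\mathrm{P}_C(D_I)$ equals $\int_C\prod_{\{i,j\}\subseteq I,\,i\ne j}\bigl(1-F(\frac{x_i+x_j}{2})\bigr)\prod_{i}g(x_i)\,dx_i$. *)

theory Defs
  imports "HOL-Analysis.Analysis"
begin

definition good_distribution :: "(real \<Rightarrow> real) \<Rightarrow> (real \<Rightarrow> real) \<Rightarrow> bool" where
  "good_distribution F g \<longleftrightarrow>
     g integrable_on {0..1} \<and>
     (\<forall>x\<in>{0..1}. F x = integral {0..x} g) \<and>
     F 1 = 1 \<and>
     (\<forall>x\<in>{0..1}. g x > 0) \<and>
     antimono_on {0..1} g \<and>
     g differentiable_on {0..1} \<and>
     mono_on {0..<1} (\<lambda>x. g x / (1 - F x))"

text \<open>The diagonal entries (f_ii)_{i in I} as points of [0,1]^I.\<close>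
definition cube :: "nat set \<Rightarrow> (nat \<Rightarrow> real) set" where
  "cube I = PiE I (\<lambda>_. {0..1})"

definition PC :: "(real \<Rightarrow> real) \<Rightarrow> (real \<Rightarrow> real) \<Rightarrow> nat set \<Rightarrow> (nat \<Rightarrow> real) set \<Rightarrow> real" where
  "PC F g I C =
     (\<integral>x. (if x \<in> C then
              (\<Prod>p\<in>{(i,j). i \<in> I \<and> j \<in> I \<and> i < j}. 1 - F ((x (fst p) + x (snd p)) / 2))
              * (\<Prod>i\<in>I. g (x i))
            else 0)
        \<partial>(PiM I (\<lambda>_. restrict_space lborel {0..1})))"

definition PD :: "(real \<Rightarrow> real) \<Rightarrow> (real \<Rightarrow> real) \<Rightarrow> nat set \<Rightarrow> real" where
  "PD F g I = PC F g I (cube I)"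

definition C1 :: "(real \<Rightarrow> real) \<Rightarrow> nat set \<Rightarrow> (nat \<Rightarrow> real) set" where
  "C1 F I = {x \<in> cube I. \<bar>(\<Sum>i\<in>I. F (x i)) - 2\<bar> \<le> real (card I) powr (-1/3)}"

end

theory Submission
  imports Defs
begin

(*
  Since the density g is non-increasing, F is midpoint concave, so
  1 - F((x+y)/2) <= exp (-(F x + F y)/2), and the weight of the pair constraints is at most
  exp (-a S) with a = (r-1)/2 and S = sum of the F(x_i).  Outside C1 the sum S is further than
  delta = r^(-1/3) from 2, and a Chernoff-type tilting bounds exp (-a S) by
  K1 exp (-b1 S) + K2 exp (-b2 S) with b1 = r/(2+delta) <= a <= b2 = r/(2-delta).  Each tilted
  term integrates to a product of one-dimensional integrals of g exp (-b F), which equal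
  (1 - exp (-b))/b <= 1/b, and for this choice of b1, b2 both terms are at most
  (2/r)^r exp (2 - r^(1/3)/8).
*)

lemma ln_one_plus_le_cubic:
  fixes u :: real
  assumes "u > -1"
  shows "ln (1 + u) \<le> u - u^2/2 + u^3/3"
proof -
  define f where "f x = x - x^2/2 + x^3/3 - ln (1 + x)" for x :: real
  have deriv: "DERIV f x :> x^3 / (1 + x)" if "x > -1" for x
  proof -
    have "DERIV f x :> 1 - x + x^2 - 1 / (1 + x)"
      unfolding f_def using that by (auto intro!: derivative_eq_intros simp: power2_eq_square)
    moreover have "1 - x + x^2 - 1 / (1 + x) = x^3 / (1 + x)"
      using that by (simp add: field_simps power2_eq_square power3_eq_cube)
    ultimately show ?thesis by simp
  qed
  have "f 0 \<le> f u"
  proof (cases "u \<ge> 0")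
    case True
    show ?thesis
    proof (rule DERIV_nonneg_imp_nondecreasing[OF True])
      fix x assume "0 \<le> x" "x \<le> u"
      then show "\<exists>y. DERIV f x :> y \<and> y \<ge> 0" using deriv[of x] by auto
    qed
  next
    case False
    show ?thesis
    proof (rule DERIV_nonpos_imp_nonincreasing[of u 0])
      fix x assume "u \<le> x" "x \<le> 0"
      then show "\<exists>y. DERIV f x :> y \<and> y \<le> 0"
        using deriv[of x] assms by (auto simp: divide_nonpos_pos)
    qed (use False in auto)
  qed
  then show ?thesis by (simp add: f_def)
qed

lemma sum_pairs_less:
  fixes u :: "nat \<Rightarrow> real"
  assumes "finite I"
  shows "(\<Sum>p\<in>{(i,j). i \<in> I \<and> j \<in> I \<and> i < j}. u (fst p) + u (snd p)) = (real (card I) - 1) * sum u I"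
proof -
  define P where "P = {(i,j). i \<in> I \<and> j \<in> I \<and> i < j}"
  define s where "s p = u (fst p) + u (snd p)" for p
  have fin: "finite P" using assms by (auto simp: P_def intro: finite_subset[of _ "I \<times> I"])
  have split: "I \<times> I = P \<union> prod.swap ` P \<union> (\<lambda>i. (i,i)) ` I"
    by (auto simp: P_def image_iff)
  have "sum s (I \<times> I) = sum s P + sum (s \<circ> prod.swap) P + (\<Sum>i\<in>I. 2 * u i)"
    unfolding split using fin assms
    by (subst sum.union_disjoint; (subst sum.union_disjoint)?)
      (auto simp: P_def sum.reindex inj_on_def s_def)
  also have "sum (s \<circ> prod.swap) P = sum s P" by (simp add: s_def add.commute)
  finally have "sum s (I \<times> I) = 2 * sum s P + 2 * sum u I" by (simp add: sum_distrib_left)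
  moreover have "sum s (I \<times> I) = (\<Sum>i\<in>I. \<Sum>j\<in>I. u i + u j)"
    by (simp add: sum.cartesian_product s_def split_beta')
  moreover have "\<dots> = 2 * real (card I) * sum u I"
    by (simp add: sum.distrib sum_distrib_left mult.assoc)
  ultimately show ?thesis by (simp add: P_def s_def algebra_simps)
qed

lemma exp_tilting_le:
  fixes a b1 b2 m \<delta> S :: real
  assumes "b1 \<le> a" "a \<le> b2" "\<not> \<bar>S - m\<bar> \<le> \<delta>"
  shows "exp (- a * S) \<le> exp ((b1 - a) * (m + \<delta>)) * exp (- b1 * S) + exp ((b2 - a) * (m - \<delta>)) * exp (- b2 * S)"
proof (cases "S \<ge> m + \<delta>")
  case True
  have "(a - b1) * (m + \<delta>) \<le> (a - b1) * S" using True assms by (intro mult_left_mono) auto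
  then have "exp (- a * S) \<le> exp ((b1 - a) * (m + \<delta>)) * exp (- b1 * S)"
    by (simp add: exp_add[symmetric] algebra_simps)
  then show ?thesis by (simp add: add_increasing2)
next
  case False
  with assms have "S \<le> m - \<delta>" by auto
  then have "(b2 - a) * S \<le> (b2 - a) * (m - \<delta>)" using assms by (intro mult_left_mono) auto
  then have "exp (- a * S) \<le> exp ((b2 - a) * (m - \<delta>)) * exp (- b2 * S)"
    by (simp add: exp_add[symmetric] algebra_simps)
  then show ?thesis by (simp add: add_increasing)
qed

lemma tilted_term_le:
  fixes r :: nat and u :: real
  assumes "u > -1" "r > 0"
  defines "b \<equiv> real r / (2 * (1 + u))"
  shows "exp ((b - (real r - 1) / 2) * (2 * (1 + u))) * (1 / b) ^ r
           \<le> (2 / real r) ^ r * exp (1 + u - real r * u^2 / 2 + real r * u^3 / 3)"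
proof -
  have "(b - (real r - 1) / 2) * (2 * (1 + u)) = 1 + u - real r * u"
    using assms by (simp add: b_def field_simps)
  moreover have "(1 / b) ^ r = (2 / real r) ^ r * exp (real r * ln (1 + u))"
    using assms by (simp add: b_def exp_of_nat_mult power_mult_distrib[symmetric])
  ultimately have "exp ((b - (real r - 1) / 2) * (2 * (1 + u))) * (1 / b) ^ r
      = (2 / real r) ^ r * exp (1 + u - real r * u + real r * ln (1 + u))"
    by (simp add: exp_add)
  also have "\<dots> \<le> (2 / real r) ^ r * exp (1 + u - real r * u^2 / 2 + real r * u^3 / 3)"
    using mult_left_mono[OF ln_one_plus_le_cubic[OF assms(1)], of "real r"]
    by (intro mult_left_mono) (auto simp: algebra_simps)
  finally show ?thesis .
qed

lemma tilting_error_le: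
  fixes r :: nat
  assumes r: "real r \<ge> 120^3"
  defines "\<delta> \<equiv> real r powr (-1/3)" and "a \<equiv> (real r - 1) / 2"
  defines "b1 \<equiv> real r / (2 + \<delta>)" and "b2 \<equiv> real r / (2 - \<delta>)"
  shows "0 < b1" "b1 \<le> a" "a \<le> b2"
    "exp ((b1 - a) * (2 + \<delta>)) * (1 / b1) ^ r + exp ((b2 - a) * (2 - \<delta>)) * (1 / b2) ^ r
       \<le> (2 / real r) ^ r * exp (- (real r powr (1/3)) / 10)"
proof -
  define s where "s = real r powr (1/3)"
  define t where "t = 1 / (2 * s)"
  have r0: "real r > 0" using r by simp
  have s3: "real r = s^3"
    using r0 by (simp add: s_def powr_realpow[symmetric] powr_powr)
  have s120: "s \<ge> 120"
  proof (rule ccontr)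
    assume "\<not> s \<ge> 120"
    then have "s^3 < 120^3" using r0 s3 by (intro power_strict_mono) auto
    with s3 r show False by simp
  qed
  have \<delta>: "\<delta> = 2 * t"
    using r0 by (simp add: \<delta>_def s_def t_def powr_minus_divide)
  have b1: "b1 = real r / (2 * (1 + t))" and b2: "b2 = real r / (2 * (1 + - t))"
    by (simp_all add: b1_def b2_def \<delta> algebra_simps)
  have t: "0 < t" "t \<le> 1/240" using s120 by (auto simp: t_def)
  show "0 < b1" using t r0 by (simp add: b1)
  have "2 * s + 1 \<le> 120 * 120 * s" using s120 by simp
  also have "\<dots> \<le> s * s * s" using s120 by (intro mult_right_mono mult_mono) auto
  finally have cube: "2 * s + 1 \<le> s * s * s" .
  then show "b1 \<le> a"
    using t s120 by (simp add: b1 a_def s3 t_def field_simps power3_eq_cube)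
  show "a \<le> b2"
    using cube t s120 by (simp add: b2 a_def s3 t_def field_simps power3_eq_cube)
  have exponent: "1 + u - real r * u^2 / 2 + real r * u^3 / 3 \<le> 2 - s / 8" if "\<bar>u\<bar> = t" for u
  proof -
    have "u^2 = t^2" using that by (metis power2_abs)
    moreover have "real r * t^2 = s / 4" "real r * t^3 = 1 / 8"
      using s120 by (simp_all add: s3 t_def field_simps power2_eq_square power3_eq_cube)
    ultimately have "real r * u^2 = s / 4" "real r * \<bar>u\<bar>^3 = 1 / 8" by (simp_all add: that)
    moreover have "u^3 \<le> \<bar>u\<bar>^3" by (metis abs_ge_self power_abs)
    then have "real r * u^3 \<le> real r * \<bar>u\<bar>^3" using r0 by simp
    ultimately show ?thesis using that t by linarith
  qed
  have T1: "exp ((b1 - a) * (2 + \<delta>)) * (1 / b1) ^ r \<le> (2 / real r) ^ r * exp (2 - s / 8)"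
    using tilted_term_le[of t r] exponent[of t] t r0
    by (force simp: b1 a_def \<delta> intro: order.trans)
  have T2: "exp ((b2 - a) * (2 - \<delta>)) * (1 / b2) ^ r \<le> (2 / real r) ^ r * exp (2 - s / 8)"
    using tilted_term_le[of "- t" r] exponent[of "- t"] t r0
    by (force simp: b2 a_def \<delta> intro: order.trans)
  have "2 * exp (2 - s / 8) \<le> exp (s / 40 - 2) * exp (2 - s / 8)"
    using s120 exp_ge_add_one_self[of "s / 40 - 2"] by (intro mult_right_mono) auto
  also have "\<dots> = exp (- s / 10)" by (simp add: exp_add[symmetric])
  finally have "2 * ((2 / real r) ^ r * exp (2 - s / 8)) \<le> (2 / real r) ^ r * exp (- s / 10)"
    by (simp add: mult.left_commute[of 2] mult_left_mono)
  with T1 T2 show "exp ((b1 - a) * (2 + \<delta>)) * (1 / b1) ^ r + exp ((b2 - a) * (2 - \<delta>)) * (1 / b2) ^ r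
       \<le> (2 / real r) ^ r * exp (- (real r powr (1/3)) / 10)"
    by (simp add: s_def)
qed

abbreviation unit_lborel :: "real measure" where
  "unit_lborel \<equiv> restrict_space lborel {0..1}"

abbreviation cube_measure :: "nat set \<Rightarrow> (nat \<Rightarrow> real) measure" where
  "cube_measure I \<equiv> PiM I (\<lambda>_. unit_lborel)"

definition pair_weight :: "(real \<Rightarrow> real) \<Rightarrow> nat set \<Rightarrow> (nat \<Rightarrow> real) \<Rightarrow> real" where
  "pair_weight F I x = (\<Prod>p\<in>{(i,j). i \<in> I \<and> j \<in> I \<and> i < j}. 1 - F ((x (fst p) + x (snd p)) / 2))"

definition density_prod :: "(real \<Rightarrow> real) \<Rightarrow> nat set \<Rightarrow> (nat \<Rightarrow> real) \<Rightarrow> real" where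
  "density_prod g I x = (\<Prod>i\<in>I. g (x i))"

lemma PC_eq_integral:
  "PC F g I C = (\<integral>x. (if x \<in> C then pair_weight F I x * density_prod g I x else 0) \<partial>cube_measure I)"
  unfolding PC_def pair_weight_def density_prod_def by (rule refl)

lemma product_sigma_finite_unit_lborel: "product_sigma_finite (\<lambda>_::nat. unit_lborel)"
  unfolding product_sigma_finite_def
  by (auto intro!: sigma_finite_measure_restrict_space lborel.sigma_finite_measure_axioms)

lemma space_cube_measure: "space (cube_measure I) = cube I"
  by (simp add: space_PiM space_restrict_space cube_def)

lemma space_cube_measureD: "x \<in> space (cube_measure I) \<Longrightarrow> i \<in> I \<Longrightarrow> x i \<in> {0..1}"
  by (auto simp: space_cube_measure cube_def)

lemma measurable_component_unit_lborel:
  assumes "i \<in> I"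
  shows "(\<lambda>x. x i) \<in> borel_measurable (cube_measure I)"
proof -
  have "(\<lambda>x::real. x) \<in> borel_measurable unit_lborel"
    by (intro measurable_restrict_space1) simp
  then show ?thesis
    using measurable_component_singleton[OF assms] by (rule measurable_compose[rotated])
qed

lemma borel_measurable_continuous_on_compose:
  fixes h :: "real \<Rightarrow> real"
  assumes "continuous_on A h" "f \<in> borel_measurable M" "\<And>x. x \<in> space M \<Longrightarrow> f x \<in> A"
  shows "(\<lambda>x. h (f x)) \<in> borel_measurable M"
proof -
  have "f \<in> measurable M (restrict_space borel A)"
    using assms by (intro measurable_restrict_space2) auto
  then show ?thesis
    using borel_measurable_continuous_on_restrict[OF assms(1)] by (rule measurable_compose)
qed

lemma integrable_unit_lborel_continuous:
  fixes h :: "real \<Rightarrow> real"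
  shows "continuous_on {0..1} h \<Longrightarrow> integrable unit_lborel h"
  by (subst integrable_restrict_space) (use borel_integrable_compact[OF compact_Icc, of 0 1 h] in auto)

locale good_density =
  fixes F g :: "real \<Rightarrow> real"
  assumes good: "good_distribution F g"
begin

lemma continuous_on_g: "continuous_on {0..1} g"
  using good unfolding good_distribution_def by (auto intro: differentiable_imp_continuous_on)

lemma F_eq_integral: "x \<in> {0..1} \<Longrightarrow> F x = integral {0..x} g"
  using good unfolding good_distribution_def by auto

lemma g_pos: "x \<in> {0..1} \<Longrightarrow> g x > 0"
  using good unfolding good_distribution_def by auto

lemma g_antimono: "x \<in> {0..1} \<Longrightarrow> y \<in> {0..1} \<Longrightarrow> x \<le> y \<Longrightarrow> g y \<le> g x"
  using good unfolding good_distribution_def monotone_on_def by auto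

lemma g_integrable: "0 \<le> a \<Longrightarrow> b \<le> 1 \<Longrightarrow> g integrable_on {a..b}"
  by (rule integrable_continuous_real, rule continuous_on_subset[OF continuous_on_g]) auto

lemma F_0: "F 0 = 0"
  using F_eq_integral[of 0] by simp

lemma F_1: "F 1 = 1"
  using good unfolding good_distribution_def by auto

lemma F_diff: "0 \<le> a \<Longrightarrow> a \<le> b \<Longrightarrow> b \<le> 1 \<Longrightarrow> F b - F a = integral {a..b} g"
  using Henstock_Kurzweil_Integration.integral_combine[where a=0 and c=a and b=b and f=g]
    g_integrable[of 0 b] F_eq_integral[of a] F_eq_integral[of b]
  by auto

lemma F_mono: "0 \<le> a \<Longrightarrow> a \<le> b \<Longrightarrow> b \<le> 1 \<Longrightarrow> F a \<le> F b"
  using F_diff[of a b] integral_nonneg[OF g_integrable[of a b]] g_pos by (force intro: less_imp_le)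

lemma F_range: "x \<in> {0..1} \<Longrightarrow> F x \<in> {0..1}"
  using F_mono[of 0 x] F_mono[of x 1] F_0 F_1 by auto

lemma continuous_on_F: "continuous_on {0..1} F"
proof -
  have "continuous_on {0..1} (\<lambda>x. integral {0..x} g)"
    by (rule indefinite_integral_continuous_1) (use g_integrable in auto)
  then show ?thesis by (rule continuous_on_eq) (use F_eq_integral in auto)
qed

lemma F_midpoint_ge:
  assumes "a \<in> {0..1}" "b \<in> {0..1}"
  shows "(F a + F b) / 2 \<le> F ((a + b) / 2)"
proof -
  have ordered: "(F a + F b) / 2 \<le> F ((a + b) / 2)" if "0 \<le> a" "a \<le> b" "b \<le> 1" for a b
  proof -
    define m where "m = (a + b) / 2"
    have m: "a \<le> m" "m \<le> b" using that by (auto simp: m_def)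
    have halves: "m - a = b - m" by (simp add: m_def field_simps)
    have "integral {a..m} (\<lambda>_. g m) \<le> integral {a..m} g"
      by (rule integral_le) (use that m g_integrable[of a m] g_antimono in auto)
    then have "(m - a) * g m \<le> F m - F a" using F_diff[of a m] that m by simp
    moreover have "integral {m..b} g \<le> integral {m..b} (\<lambda>_. g m)"
      by (rule integral_le) (use that m g_integrable[of m b] g_antimono in auto)
    then have "F b - F m \<le> (b - m) * g m" using F_diff[of m b] that m by simp
    ultimately show ?thesis using halves by (simp add: m_def[symmetric])
  qed
  show ?thesis
    using ordered[of a b] ordered[of b a] assms by (cases "a \<le> b") (auto simp: add.commute)
qed

lemma pair_weight_bounds:
  assumes "finite I" "\<And>i. i \<in> I \<Longrightarrow> x i \<in> {0..1}"
  shows "0 \<le> pair_weight F I x" "pair_weight F I x \<le> 1"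
    "pair_weight F I x \<le> exp (- ((real (card I) - 1) / 2 * (\<Sum>i\<in>I. F (x i))))"
proof -
  define P where "P = {(i,j). i \<in> I \<and> j \<in> I \<and> i < j}"
  define w where "w p = 1 - F ((x (fst p) + x (snd p)) / 2)" for p
  have finP: "finite P" using assms by (auto simp: P_def intro: finite_subset[of _ "I \<times> I"])
  have factor: "0 \<le> w p \<and> w p \<le> 1 \<and> w p \<le> exp (- ((F (x (fst p)) + F (x (snd p))) / 2))"
    if "p \<in> P" for p
  proof -
    have x: "x (fst p) \<in> {0..1}" "x (snd p) \<in> {0..1}" using that assms by (auto simp: P_def)
    then have "w p \<le> 1 + - ((F (x (fst p)) + F (x (snd p))) / 2)"
      using F_midpoint_ge[OF x] by (simp add: w_def)
    also have "\<dots> \<le> exp (- ((F (x (fst p)) + F (x (snd p))) / 2))" by (rule exp_ge_add_one_self)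
    finally show ?thesis using x F_range[of "x (fst p)"] F_range[of "x (snd p)"]
      F_range[of "(x (fst p) + x (snd p)) / 2"] by (auto simp: w_def)
  qed
  show "0 \<le> pair_weight F I x" "pair_weight F I x \<le> 1"
    using factor
    by (auto simp: pair_weight_def P_def[symmetric] w_def[symmetric] intro: prod_nonneg prod_le_1)
  have "pair_weight F I x \<le> (\<Prod>p\<in>P. exp (- ((F (x (fst p)) + F (x (snd p))) / 2)))"
    unfolding pair_weight_def P_def[symmetric] w_def[symmetric] using factor by (intro prod_mono) auto
  also have "\<dots> = exp (- (\<Sum>p\<in>P. F (x (fst p)) + F (x (snd p))) / 2)"
    using finP by (simp add: exp_sum[symmetric] sum_negf sum_divide_distrib)
  also have "(\<Sum>p\<in>P. F (x (fst p)) + F (x (snd p))) = (real (card I) - 1) * (\<Sum>i\<in>I. F (x i))"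
    unfolding P_def by (rule sum_pairs_less[OF assms(1)])
  finally show "pair_weight F I x \<le> exp (- ((real (card I) - 1) / 2 * (\<Sum>i\<in>I. F (x i))))"
    by simp
qed

lemma integral_tilted_density:
  assumes "b > 0"
  shows "(\<integral>t. g t * exp (- b * F t) \<partial>unit_lborel) = (1 - exp (- b)) / b"
proof -
  define G where "G u = integral {0..u} g" for u
  have G: "(G has_real_derivative g x) (at x within {0..1})" if "x \<in> {0..1}" for x
    unfolding G_def has_real_derivative_iff_has_vector_derivative
    by (rule integral_has_vector_derivative[OF continuous_on_g that])
  have "((\<lambda>u. - exp (- b * G u) / b) has_vector_derivative g x * exp (- b * G x)) (at x within {0..1})"
    if "x \<in> {0..1}" for x
    unfolding has_real_derivative_iff_has_vector_derivative[symmetric]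
    using assms by (auto intro!: derivative_eq_intros G[OF that] simp: field_simps)
  then have "((\<lambda>x. g x * exp (- b * G x)) has_integral (- exp (- b * G 1) / b) - (- exp (- b * G 0) / b)) {0..1}"
    by (intro fundamental_theorem_of_calculus) auto
  moreover have "G 0 = 0" "G 1 = 1" using F_eq_integral[of 1] F_1 by (auto simp: G_def)
  ultimately have "((\<lambda>x. g x * exp (- b * G x)) has_integral (1 - exp (- b)) / b) {0..1}"
    by (simp add: diff_divide_distrib)
  then have "((\<lambda>x. g x * exp (- b * F x)) has_integral (1 - exp (- b)) / b) {0..1}"
    by (rule has_integral_eq[rotated]) (simp add: G_def F_eq_integral)
  moreover have "continuous_on {0..1} (\<lambda>x. g x * exp (- b * F x))"
    by (intro continuous_intros continuous_on_g continuous_on_F)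
  then have "set_integrable lborel {0..1} (\<lambda>x. g x * exp (- b * F x))"
    unfolding set_integrable_def by (rule borel_integrable_compact[OF compact_Icc])
  ultimately have "(LINT t : {0..1} | lborel. g t * exp (- b * F t)) = (1 - exp (- b)) / b"
    by (simp add: set_borel_integral_eq_integral(2) integral_unique)
  then show ?thesis
    by (subst integral_restrict_space) (auto simp: set_lebesgue_integral_def)
qed

lemma measurable_pair_weight: "pair_weight F I \<in> borel_measurable (cube_measure I)"
  unfolding pair_weight_def[abs_def]
proof (intro borel_measurable_prod borel_measurable_diff borel_measurable_const)
  fix p assume "p \<in> {(i,j). i \<in> I \<and> j \<in> I \<and> i < j}"
  then have p: "fst p \<in> I" "snd p \<in> I" by auto
  have "(\<lambda>x. (x (fst p) + x (snd p)) / 2) \<in> borel_measurable (cube_measure I)"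
    using measurable_component_unit_lborel[OF p(1)] measurable_component_unit_lborel[OF p(2)]
    by measurable
  moreover have "(x (fst p) + x (snd p)) / 2 \<in> {0..1}" if "x \<in> space (cube_measure I)" for x
  proof -
    have "x (fst p) \<in> {0..1}" "x (snd p) \<in> {0..1}"
      using that p by (metis space_cube_measureD)+
    then show ?thesis by auto
  qed
  ultimately show "(\<lambda>x. F ((x (fst p) + x (snd p)) / 2)) \<in> borel_measurable (cube_measure I)"
    by (rule borel_measurable_continuous_on_compose[OF continuous_on_F])
qed

lemma measurable_density_prod: "density_prod g I \<in> borel_measurable (cube_measure I)"
  unfolding density_prod_def[abs_def]
  by (intro borel_measurable_prod borel_measurable_continuous_on_compose[OF continuous_on_g]
      measurable_component_unit_lborel) (metis space_cube_measureD)+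

lemma measurable_sum_F: "(\<lambda>x. \<Sum>i\<in>I. F (x i)) \<in> borel_measurable (cube_measure I)"
  by (intro borel_measurable_sum borel_measurable_continuous_on_compose[OF continuous_on_F]
      measurable_component_unit_lborel) (metis space_cube_measureD)+

lemma density_prod_nonneg: "x \<in> space (cube_measure I) \<Longrightarrow> 0 \<le> density_prod g I x"
  using g_pos space_cube_measureD by (auto simp: density_prod_def intro!: less_imp_le[OF prod_pos])

lemma integrable_bounded_times_density_prod:
  assumes "finite I" "h \<in> borel_measurable (cube_measure I)"
    "\<And>x. x \<in> space (cube_measure I) \<Longrightarrow> \<bar>h x\<bar> \<le> 1"
  shows "integrable (cube_measure I) (\<lambda>x. h x * density_prod g I x)"
proof (rule Bochner_Integration.integrable_bound)
  interpret product_sigma_finite "\<lambda>_::nat. unit_lborel" by (rule product_sigma_finite_unit_lborel)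
  show "integrable (cube_measure I) (density_prod g I)"
    unfolding density_prod_def[abs_def]
    by (intro product_integrable_prod assms(1) integrable_unit_lborel_continuous continuous_on_g)
  show "AE x in cube_measure I. norm (h x * density_prod g I x) \<le> norm (density_prod g I x)"
    using assms(3) density_prod_nonneg by (auto simp: abs_mult intro!: mult_left_le_one_le)
qed (use assms(2) measurable_density_prod in measurable)

lemma integral_density_prod_tilted:
  assumes "finite I" "b > 0"
  shows "integrable (cube_measure I) (\<lambda>x. density_prod g I x * exp (- b * (\<Sum>i\<in>I. F (x i))))"
    "(\<integral>x. density_prod g I x * exp (- b * (\<Sum>i\<in>I. F (x i))) \<partial>cube_measure I) = ((1 - exp (- b)) / b) ^ card I"
proof -
  interpret product_sigma_finite "\<lambda>_::nat. unit_lborel" by (rule product_sigma_finite_unit_lborel)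
  define \<phi> where "\<phi> t = g t * exp (- b * F t)" for t
  have factor: "density_prod g I x * exp (- b * (\<Sum>i\<in>I. F (x i))) = (\<Prod>i\<in>I. \<phi> (x i))" for x
    using assms(1) by (simp add: \<phi>_def density_prod_def prod.distrib exp_sum sum_negf[symmetric] sum_distrib_left)
  have \<phi>: "integrable unit_lborel \<phi>"
    unfolding \<phi>_def by (intro integrable_unit_lborel_continuous continuous_intros continuous_on_g continuous_on_F)
  show "integrable (cube_measure I) (\<lambda>x. density_prod g I x * exp (- b * (\<Sum>i\<in>I. F (x i))))"
    unfolding factor by (rule product_integrable_prod[OF assms(1) \<phi>])
  show "(\<integral>x. density_prod g I x * exp (- b * (\<Sum>i\<in>I. F (x i))) \<partial>cube_measure I) = ((1 - exp (- b)) / b) ^ card I"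
    unfolding factor product_integral_prod[OF assms(1) \<phi>]
    using integral_tilted_density[OF assms(2)] by (simp add: \<phi>_def[abs_def])
qed

lemma PD_minus_PC_C1_eq:
  assumes "finite I"
  shows "PD F g I - PC F g I (C1 F I) =
    (\<integral>x. (if \<bar>(\<Sum>i\<in>I. F (x i)) - 2\<bar> \<le> real (card I) powr (-1/3) then 0 else pair_weight F I x)
          * density_prod g I x \<partial>cube_measure I)"
proof -
  define near where "near x \<longleftrightarrow> \<bar>(\<Sum>i\<in>I. F (x i)) - 2\<bar> \<le> real (card I) powr (-1/3)" for x
  define inside where "inside x = (if near x then pair_weight F I x else 0)" for x
  have weight: "0 \<le> pair_weight F I x \<and> pair_weight F I x \<le> 1" if "x \<in> space (cube_measure I)" for x
    using pair_weight_bounds[OF assms, of x] space_cube_measureD[OF that] by auto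
  have "inside \<in> borel_measurable (cube_measure I)"
    using measurable_pair_weight measurable_sum_F unfolding inside_def near_def by measurable
  then have inside: "integrable (cube_measure I) (\<lambda>x. inside x * density_prod g I x)"
    by (rule integrable_bounded_times_density_prod[OF assms]) (use weight in \<open>auto simp: inside_def\<close>)
  have all: "integrable (cube_measure I) (\<lambda>x. pair_weight F I x * density_prod g I x)"
    using weight by (intro integrable_bounded_times_density_prod assms measurable_pair_weight) auto
  have "PD F g I = (\<integral>x. pair_weight F I x * density_prod g I x \<partial>cube_measure I)"
    unfolding PD_def PC_eq_integral
    by (rule Bochner_Integration.integral_cong) (auto simp: space_cube_measure)
  moreover have "PC F g I (C1 F I) = (\<integral>x. inside x * density_prod g I x \<partial>cube_measure I)"
    unfolding PC_eq_integral
    by (rule Bochner_Integration.integral_cong) (auto simp: space_cube_measure C1_def inside_def near_def)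
  ultimately have "PD F g I - PC F g I (C1 F I)
      = (\<integral>x. pair_weight F I x * density_prod g I x - inside x * density_prod g I x \<partial>cube_measure I)"
    by (simp only: Bochner_Integration.integral_diff[OF all inside])
  also have "\<dots> = (\<integral>x. (if near x then 0 else pair_weight F I x) * density_prod g I x \<partial>cube_measure I)"
    by (rule Bochner_Integration.integral_cong) (auto simp: inside_def)
  finally show ?thesis by (simp only: near_def)
qed

lemma PD_minus_PC_C1_le_tilted:
  fixes I :: "nat set" and b1 b2 :: real
  defines "r \<equiv> card I"
  defines "a \<equiv> (real r - 1) / 2" and "\<delta> \<equiv> real r powr (-1/3)"
  assumes "finite I" "0 < b1" "b1 \<le> a" "a \<le> b2"
  shows "PD F g I - PC F g I (C1 F I)
    \<le> exp ((b1 - a) * (2 + \<delta>)) * (1 / b1) ^ r + exp ((b2 - a) * (2 - \<delta>)) * (1 / b2) ^ r"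
proof -
  define S where "S x = (\<Sum>i\<in>I. F (x i))" for x :: "nat \<Rightarrow> real"
  define G where "G = density_prod g I"
  define K1 where "K1 = exp ((b1 - a) * (2 + \<delta>))"
  define K2 where "K2 = exp ((b2 - a) * (2 - \<delta>))"
  define tilted where "tilted b x = G x * exp (- b * S x)" for b x
  have b2: "0 < b2" using assms by linarith
  have tilted: "integrable (cube_measure I) (tilted b)" "(\<integral>x. tilted b x \<partial>cube_measure I) \<le> (1 / b) ^ r"
    if "0 < b" for b
  proof -
    show "integrable (cube_measure I) (tilted b)"
      using integral_density_prod_tilted(1)[OF assms(4) that] by (simp add: tilted_def[abs_def] G_def S_def)
    have "(\<integral>x. tilted b x \<partial>cube_measure I) = ((1 - exp (- b)) / b) ^ r"
      using integral_density_prod_tilted(2)[OF assms(4) that] by (simp add: tilted_def[abs_def] G_def S_def r_def)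
    also have "\<dots> \<le> (1 / b) ^ r" using that by (intro power_mono divide_right_mono) auto
    finally show "(\<integral>x. tilted b x \<partial>cube_measure I) \<le> (1 / b) ^ r" .
  qed
  have tilted_nonneg: "0 \<le> tilted b x" if "x \<in> space (cube_measure I)" for b x
    using density_prod_nonneg[OF that] by (simp add: tilted_def G_def)
  have pointwise: "(if \<bar>S x - 2\<bar> \<le> \<delta> then 0 else pair_weight F I x) * G x \<le> K1 * tilted b1 x + K2 * tilted b2 x"
    if x: "x \<in> space (cube_measure I)" for x
  proof (cases "\<bar>S x - 2\<bar> \<le> \<delta>")
    case True
    then show ?thesis using tilted_nonneg[OF x] by (simp add: K1_def K2_def)
  next
    case False
    have "pair_weight F I x \<le> exp (- a * S x)"
      using pair_weight_bounds(3)[OF assms(4)] space_cube_measureD[OF x] by (simp add: a_def r_def S_def)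
    also have "\<dots> \<le> K1 * exp (- b1 * S x) + K2 * exp (- b2 * S x)"
      unfolding K1_def K2_def using exp_tilting_le[OF assms(6,7) False] .
    finally have "pair_weight F I x * G x \<le> (K1 * exp (- b1 * S x) + K2 * exp (- b2 * S x)) * G x"
      using density_prod_nonneg[OF x] by (intro mult_right_mono) (auto simp: G_def)
    then show ?thesis using False by (simp add: tilted_def algebra_simps)
  qed
  have "PD F g I - PC F g I (C1 F I) \<le> (\<integral>x. K1 * tilted b1 x + K2 * tilted b2 x \<partial>cube_measure I)"
    unfolding PD_minus_PC_C1_eq[OF assms(4)]
    using pointwise tilted_nonneg tilted[OF assms(5)] tilted[OF b2]
    by (intro integral_mono') (auto simp: S_def G_def \<delta>_def r_def K1_def K2_def)
  also have "\<dots> \<le> K1 * (1 / b1) ^ r + K2 * (1 / b2) ^ r"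
    using tilted[OF assms(5)] tilted[OF b2]
    by (auto intro!: add_mono mult_left_mono simp: K1_def K2_def)
  finally show ?thesis by (simp add: K1_def K2_def)
qed

end

theorem lemma2p3:
  fixes F g :: "real \<Rightarrow> real"
  assumes "good_distribution F g"
  shows "\<exists>R::nat. \<forall>r\<ge>R. \<forall>(n::nat) (I::nat set). I \<subseteq> {1..n} \<longrightarrow> card I = r \<longrightarrow>
           PD F g I - PC F g I (C1 F I) \<le> (2 / real r) ^ r * exp (- (real r powr (1/3)) / 10)"
proof (intro exI[of _ "120^3"] allI impI)
  interpret good_density F g by (rule good_density.intro[OF assms])
  fix r n :: nat and I :: "nat set"
  assume "r \<ge> 120^3" "I \<subseteq> {1..n}" "card I = r"
  then have "finite I" "real r \<ge> 120^3" by (auto intro: finite_subset)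
  note constants = tilting_error_le[OF this(2)]
  show "PD F g I - PC F g I (C1 F I) \<le> (2 / real r) ^ r * exp (- (real r powr (1/3)) / 10)"
    using PD_minus_PC_C1_le_tilted[of I, unfolded \<open>card I = r\<close>, OF \<open>finite I\<close> constants(1-3)]
      constants(4) by simp
qed

end
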